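(* Let $X$ be a Gorenstein fake weighted projective space with weights $(\lambda_0,\ldots,\lambda_n)$ having at worst canonical singularities, and let $h:=\sum_{i=0}^n\lambda_i$. Then $h\leq t_n$, where $t_n:=y_n-1$ and $(y_k)$ is the Sylvester sequence $y_0:=2$, $y_k:=1+y_0y_1\cdots y_{k-1}$ for $k\ge1$.
   Context: Let $N\cong\mathbb{Z}^n$ be a lattice and $N_\mathbb{R}:=N\otimes_\mathbb{Z}\mathbb{R}$. Let $\rho_0,\ldots,\rho_n\in N$ be primitive lattice points with $N_\mathbb{R}=\sum_{i=0}^n\mathbb{R}_{\geq0}\rho_i$. There are positive integers $\lambda_0,\ldots,\lambda_n$ with $\gcd\{\lambda_0,\ldots,\lambda_n\}=1$, unique up to order, such that $\sum_{i=0}^n\lambda_i\rho_i=0$. The cones $\sigma_i$ generated by $\{\rho_j: j\neq i\}$ generate a complete simplicial fan; the associated projective toric variety $X$ is called a fake weighted projective space with weights $(\lambda_0,\ldots,\lambda_n)$. *)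

theory Defs
  imports "HOL-Analysis.Analysis"
begin

text \<open>The lattice N is int^'n, with n = CARD('n); N_R is real^'n.\<close>

definition lat_to_real :: "int^'n \<Rightarrow> real^'n" where
  "lat_to_real v = (\<chi> k. real_of_int (v $ k))"

definition lat_pair :: "int^'n \<Rightarrow> int^'n \<Rightarrow> int" where
  "lat_pair u v = (\<Sum>k\<in>UNIV. u $ k * v $ k)"

definition primitive_lattice_point :: "int^'n \<Rightarrow> bool" where
  "primitive_lattice_point v \<longleftrightarrow> v \<noteq> 0 \<and>
     (\<forall>(k::int) (w::int^'n). v = k *s w \<longrightarrow> \<bar>k\<bar> = 1)"

definition positively_spanning :: "(nat \<Rightarrow> int^'n) \<Rightarrow> bool" where
  "positively_spanning \<rho> \<longleftrightarrow>
     (\<forall>x::real^'n. \<exists>c::nat \<Rightarrow> real. (\<forall>i. c i \<ge> 0) \<and>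
        x = (\<Sum>i\<in>{0..CARD('n)}. c i *\<^sub>R lat_to_real (\<rho> i)))"

definition are_weights :: "(nat \<Rightarrow> int^'n) \<Rightarrow> (nat \<Rightarrow> nat) \<Rightarrow> bool" where
  "are_weights \<rho> wt \<longleftrightarrow>
     (\<forall>i\<in>{0..CARD('n)}. wt i > 0) \<and>
     Gcd (wt ` {0..CARD('n)}) = 1 \<and>
     (\<Sum>i\<in>{0..CARD('n)}. int (wt i) *s \<rho> i) = 0"

definition fake_wps_data :: "(nat \<Rightarrow> int^'n) \<Rightarrow> bool" where
  "fake_wps_data \<rho> \<longleftrightarrow>
     (\<forall>i\<in>{0..CARD('n)}. primitive_lattice_point (\<rho> i)) \<and> positively_spanning \<rho>"

text \<open>Gorenstein: for every maximal cone sigma_i = cone(rho_j : j \<noteq> i) there is a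
  lattice point u_i of the dual lattice M with <u_i, rho_j> = 1 for all j \<noteq> i.\<close>
definition fwps_gorenstein :: "(nat \<Rightarrow> int^'n) \<Rightarrow> bool" where
  "fwps_gorenstein \<rho> \<longleftrightarrow>
     (\<forall>i\<in>{0..CARD('n)}. \<exists>u::int^'n.
        \<forall>j\<in>{0..CARD('n)} - {i}. lat_pair u (\<rho> j) = 1)"

text \<open>At worst canonical singularities (toric criterion for simplicial cones): every
  nonzero lattice point x of sigma_i satisfies u_i(x) \<ge> 1, where u_i is the (rational)
  linear form equal to 1 on the rays of sigma_i; writing x = sum_{j\<noteq>i} c_j rho_j,
  u_i(x) = sum c_j.\<close>
definition fwps_canonical :: "(nat \<Rightarrow> int^'n) \<Rightarrow> bool" where
  "fwps_canonical \<rho> \<longleftrightarrow>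
     (\<forall>i\<in>{0..CARD('n)}. \<forall>(x::int^'n) (c::nat \<Rightarrow> real).
        x \<noteq> 0 \<longrightarrow> (\<forall>j. c j \<ge> 0) \<longrightarrow>
        lat_to_real x = (\<Sum>j\<in>{0..CARD('n)} - {i}. c j *\<^sub>R lat_to_real (\<rho> j)) \<longrightarrow>
        (\<Sum>j\<in>{0..CARD('n)} - {i}. c j) \<ge> 1)"

text \<open>Sylvester sequence: y_0 = 2, y_k = 1 + y_0 ... y_{k-1}. Defined via the
  running product P k = y_0 ... y_{k-1}.\<close>
fun sylv_prod :: "nat \<Rightarrow> nat" where
  "sylv_prod 0 = 1"
| "sylv_prod (Suc k) = sylv_prod k * (1 + sylv_prod k)"

definition sylvester :: "nat \<Rightarrow> nat" where
  "sylvester k = 1 + sylv_prod k"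

lemma sylv_prod_eq: "sylv_prod k = (\<Prod>j<k. sylvester j)"
  by (induction k) (simp_all add: sylvester_def)

lemma sylvester_0: "sylvester 0 = 2"
  by (simp add: sylvester_def)

lemma sylvester_rec: "sylvester k = 1 + (\<Prod>j<k. sylvester j)"
  unfolding sylvester_def[of k] sylv_prod_eq by (rule refl)

end

theory Submission
  imports Defs
begin

(* Pairing the relation
   sum_j lambda_j rho_j = 0 with the dual point u_i of each maximal cone shows that every
   weight divides h, so k_i = h / lambda_i are n+1 unit-fraction denominators with
   sum_i 1/k_i = 1.  Coprimality of the weights gives prod_i lambda_i | h^(n-1) (a prime
   dividing h misses at least two weights), hence h^2 <= prod_i k_i.  The analytic core is
   the classical bound prod_i k_i <= (y_0 ... y_(n-1))^2 for n+1 unit fractions summing to 1,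
   sharp for the greedy (Sylvester) expansion; as y_0 ... y_(n-1) = y_n - 1, the theorem follows. *)

(* The greedy Egyptian-fraction step c -> c^2/(1+c): it maps 1/t to 1/(t(t+1)),
  the gap left after the greedy choice of the next unit fraction. *)
definition egyptian_step :: "real \<Rightarrow> real" where
  "egyptian_step c = c\<^sup>2 / (1 + c)"

lemma egyptian_step_pos: "0 < c \<Longrightarrow> 0 < egyptian_step c"
  unfolding egyptian_step_def by simp

lemma egyptian_step_mono:
  assumes "0 < a" "a \<le> b"
  shows "egyptian_step a \<le> egyptian_step b"
proof -
  have "a\<^sup>2 \<le> b\<^sup>2" using assms by (simp add: power_mono)
  moreover have "a\<^sup>2 * b \<le> b\<^sup>2 * a"
    using assms by (simp add: power2_eq_square mult_left_mono)
  ultimately have "a\<^sup>2 * (1 + b) \<le> b\<^sup>2 * (1 + a)" by (simp add: algebra_simps)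
  thus ?thesis using assms unfolding egyptian_step_def by (simp add: divide_simps)
qed

lemma egyptian_step_iter_pos: "0 < c \<Longrightarrow> 0 < (egyptian_step ^^ j) c"
  by (induction j) (auto simp: egyptian_step_pos)

lemma egyptian_step_iter_mono:
  "0 < a \<Longrightarrow> a \<le> b \<Longrightarrow> (egyptian_step ^^ j) a \<le> (egyptian_step ^^ j) b"
  by (induction j) (auto intro: egyptian_step_mono egyptian_step_iter_pos)

lemma sylv_prod_pos: "0 < sylv_prod k"
  by (induction k) auto

lemma egyptian_step_iter_half:
  "(egyptian_step ^^ j) (1/2) = 1 / real (sylv_prod (Suc j))"
proof (induction j)
  case (Suc j)
  define t where "t = real (sylv_prod (Suc j))"
  have "0 < t" unfolding t_def using sylv_prod_pos[of "Suc j"] by (simp only: of_nat_0_less_iff)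
  have "(egyptian_step ^^ Suc j) (1/2) = egyptian_step (1/t)" using Suc by (simp add: t_def)
  also have "\<dots> = 1 / (t * (1 + t))"
    unfolding egyptian_step_def using \<open>0 < t\<close> by (simp add: divide_simps power2_eq_square)
  also have "\<dots> = 1 / real (sylv_prod (Suc (Suc j)))"
    by (simp add: t_def del: sylv_prod.simps) (simp add: algebra_simps)
  finally show ?case .
qed simp

(* greedy_level A E k is the k-th prefix value A x_0 ... x_(k-1) of the extremal
  (greedy) sequence with weight A and total sum E; extremal_value m A E is the least
  possible value of A x_0 ... x_(m-1) for an admissible sequence of length m. *)
definition greedy_level :: "real \<Rightarrow> real \<Rightarrow> nat \<Rightarrow> real" where
  "greedy_level A E k = (egyptian_step ^^ (k - 1)) (A * E / (1 + A))"

definition extremal_value :: "nat \<Rightarrow> real \<Rightarrow> real \<Rightarrow> real" where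
  "extremal_value m A E = (if m \<le> 1 then A * E else (greedy_level A E (m - 1))\<^sup>2)"

lemma greedy_level_pos: "0 < A \<Longrightarrow> 0 < E \<Longrightarrow> 0 < greedy_level A E k"
  unfolding greedy_level_def by (simp add: egyptian_step_iter_pos)

lemma greedy_level_Suc: "1 \<le> k \<Longrightarrow> greedy_level A E (Suc k) = egyptian_step (greedy_level A E k)"
  unfolding greedy_level_def by (metis Suc_diff_le diff_Suc_1 funpow.simps(2) o_apply)

lemma greedy_level_restart:
  fixes A E :: real
  assumes "1 \<le> k" "1 \<le> j"
  defines "d \<equiv> greedy_level A E k"
  shows "greedy_level d d j = greedy_level A E (j + k)"
proof -
  have "d * d / (1 + d) = egyptian_step d" by (simp add: egyptian_step_def power2_eq_square)
  then have "greedy_level d d j = (egyptian_step ^^ (j - 1) \<circ> egyptian_step ^^ 1 \<circ> egyptian_step ^^ (k - 1))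
       (A * E / (1 + A))"
    by (simp add: greedy_level_def d_def)
  also have "\<dots> = (egyptian_step ^^ (j + k - 1)) (A * E / (1 + A))"
    using assms(1,2) by (simp only: funpow_add[symmetric]) (simp add: algebra_simps)
  finally show ?thesis by (simp add: greedy_level_def)
qed

lemma extremal_value_restart:
  fixes A E :: real
  assumes "1 \<le> k" "k < m"
  defines "d \<equiv> greedy_level A E k"
  shows "extremal_value (m - k) d d = extremal_value m A E"
proof (cases "m - k = 1")
  case True
  then have "k = m - 1" "\<not> m \<le> 1" using assms(1) by auto
  with True show ?thesis by (simp add: extremal_value_def d_def power2_eq_square)
next
  case False
  then have "\<not> m - k \<le> 1" "\<not> m \<le> 1" using assms(2) by auto
  moreover have "greedy_level d d (m - k - 1) = greedy_level A E (m - 1)"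
    using False assms greedy_level_restart[of k "m - k - 1"] by simp
  ultimately show ?thesis by (simp add: extremal_value_def)
qed

lemma extremal_value_mono:
  assumes "0 < c" "c \<le> A" "c \<le> E"
  shows "extremal_value m c c \<le> extremal_value m A E"
proof (cases "m \<le> 1")
  case True
  thus ?thesis using assms by (simp add: extremal_value_def mult_mono)
next
  case False
  have "c / (1 + c) \<le> A / (1 + A)" using assms by (simp add: divide_simps algebra_simps)
  then have "c / (1 + c) * c \<le> A / (1 + A) * E"
    using assms by (intro mult_mono) auto
  then have "greedy_level c c (m - 1) \<le> greedy_level A E (m - 1)"
    unfolding greedy_level_def using assms by (intro egyptian_step_iter_mono) auto
  moreover have "0 < greedy_level c c (m - 1)" using assms by (simp add: greedy_level_pos)
  ultimately show ?thesis using False by (simp add: extremal_value_def power_mono)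
qed

lemma extremal_value_1_1:
  assumes "2 \<le> m"
  shows "extremal_value m 1 1 = (1 / real (sylv_prod (m - 1)))\<^sup>2"
proof -
  have "Suc (m - 2) = m - 1" using assms by simp
  then show ?thesis using assms egyptian_step_iter_half[of "m - 2"]
    by (simp add: extremal_value_def greedy_level_def numeral_2_eq_2)
qed

lemma abel_lower_bound:
  fixes x d :: "nat \<Rightarrow> real"
  assumes decreasing: "\<forall>i. Suc i < m \<longrightarrow> x (Suc i) \<le> x i"
    and prefix_nonneg: "\<forall>k. 1 \<le> k \<longrightarrow> k < m \<longrightarrow> 0 \<le> sum d {..<k}"
    and "1 \<le> m"
  shows "x (m - 1) * sum d {..<m} \<le> (\<Sum>i<m. x i * d i)"
  using \<open>1 \<le> m\<close> decreasing prefix_nonneg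
proof (induction m rule: nat_induct_at_least)
  case (Suc m)
  have IH: "x (m - 1) * sum d {..<m} \<le> (\<Sum>i<m. x i * d i)"
    using Suc by auto
  have "0 \<le> sum d {..<m}" using Suc.prems(2) Suc.hyps by simp
  moreover have "Suc (m - 1) = m" using Suc.hyps by simp
  then have "x m \<le> x (m - 1)" using Suc.prems(1) by (metis lessI)
  ultimately have "x m * sum d {..<m} \<le> x (m - 1) * sum d {..<m}"
    by (simp add: mult_right_mono)
  with IH show ?case by (simp add: algebra_simps)
qed simp

(* Apply Abel summation to d_i = ln (y_i / x_i) and use ln t <= t - 1. *)
lemma sum_less_of_prefix_prod_le:
  fixes x y :: "nat \<Rightarrow> real"
  assumes x_pos: "\<forall>i<m. 0 < x i" and y_pos: "\<forall>i<m. 0 < y i"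
    and decreasing: "\<forall>i. Suc i < m \<longrightarrow> x (Suc i) \<le> x i"
    and prefix_le: "\<forall>k. 1 \<le> k \<longrightarrow> k < m \<longrightarrow> prod x {..<k} \<le> prod y {..<k}"
    and total_less: "prod x {..<m} < prod y {..<m}"
    and "1 \<le> m"
  shows "sum x {..<m} < sum y {..<m}"
proof -
  define d where "d i = ln (y i / x i)" for i
  have d_prefix: "sum d {..<k} = ln (prod y {..<k} / prod x {..<k})" if "k \<le> m" for k
  proof -
    have "\<forall>i<k. 0 < x i \<and> 0 < y i" using that x_pos y_pos by auto
    then have "sum d {..<k} = ln (\<Prod>i<k. y i / x i)"
      unfolding d_def by (subst ln_prod) auto
    then show ?thesis by (simp add: prod_dividef)
  qed
  have x_prefix_pos: "0 < prod x {..<k}" if "k \<le> m" for k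
    using x_pos that by (intro prod_pos) auto
  have prefix_nonneg: "\<forall>k. 1 \<le> k \<longrightarrow> k < m \<longrightarrow> 0 \<le> sum d {..<k}"
    using prefix_le x_prefix_pos d_prefix by simp
  moreover have "0 < sum d {..<m}"
    using total_less x_prefix_pos[of m] d_prefix[of m] by (simp add: ln_gt_zero)
  moreover have "0 < x (m - 1)" using x_pos \<open>1 \<le> m\<close> by simp
  ultimately have "0 < x (m - 1) * sum d {..<m}" by simp
  also have "\<dots> \<le> (\<Sum>i<m. x i * d i)"
    using abel_lower_bound decreasing prefix_nonneg \<open>1 \<le> m\<close> by blast
  also have "\<dots> \<le> (\<Sum>i<m. y i - x i)"
  proof (rule sum_mono)
    fix i assume "i \<in> {..<m}"
    then have "0 < x i" "0 < y i" using x_pos y_pos by auto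
    then have "x i * ln (y i / x i) \<le> x i * (y i / x i - 1)"
      by (intro mult_left_mono ln_le_minus_one) auto
    with \<open>0 < x i\<close> show "x i * d i \<le> y i - x i" by (simp add: d_def algebra_simps)
  qed
  finally show ?thesis by (simp add: sum_subtractf)
qed

(* Reciprocals
  of unit-fraction denominators summing to 1 are admissible for A = 1. *)
definition admissible :: "nat \<Rightarrow> real \<Rightarrow> (nat \<Rightarrow> real) \<Rightarrow> bool" where
  "admissible m A x \<longleftrightarrow> 0 < A \<and> (\<forall>i<m. 0 < x i) \<and> (\<forall>i. Suc i < m \<longrightarrow> x (Suc i) \<le> x i) \<and>
     (\<forall>k<m. A * prod x {..<k} \<le> sum x {k..<m})"

lemma admissible_shift:
  assumes "admissible m A x" "k \<le> m"
  shows "admissible (m - k) (A * prod x {..<k}) (\<lambda>i. x (i + k))"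
proof -
  have prod_split: "prod x {..<j + k} = prod x {..<k} * prod (\<lambda>i. x (i + k)) {..<j}" for j
    using prod.atLeastLessThan_concat[of 0 k "j + k" x] prod.shift_bounds_nat_ivl[of x 0 k j]
    by (simp add: atLeast0LessThan)
  have "A * prod x {..<k} * prod (\<lambda>i. x (i + k)) {..<j} \<le> sum (\<lambda>i. x (i + k)) {j..<m - k}"
    if "j < m - k" for j
  proof -
    have "A * prod x {..<j + k} \<le> sum x {j + k..<m}"
      using assms that unfolding admissible_def by auto
    then show ?thesis
      using assms(2) sum.shift_bounds_nat_ivl[of x j k "m - k"] by (simp add: prod_split mult.assoc)
  qed
  moreover have "0 < A * prod x {..<k}"
    using assms unfolding admissible_def by (intro mult_pos_pos prod_pos) auto
  moreover have "\<forall>i<m - k. 0 < x (i + k)" "\<forall>i. Suc i < m - k \<longrightarrow> x (Suc i + k) \<le> x (i + k)"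
    using assms unfolding admissible_def by auto
  ultimately show ?thesis unfolding admissible_def by simp
qed

(* The extremal sequence with weight A and sum E: its prefix products follow the
  greedy levels and its last term absorbs the remainder. *)
definition comparison_seq :: "nat \<Rightarrow> real \<Rightarrow> real \<Rightarrow> nat \<Rightarrow> real" where
  "comparison_seq m A E i =
     (if i = 0 then E / (1 + A)
      else if i < m - 1 then greedy_level A E i / (1 + greedy_level A E i)
      else greedy_level A E i)"

lemma comparison_seq_pos: "0 < A \<Longrightarrow> 0 < E \<Longrightarrow> 0 < comparison_seq m A E i"
  using greedy_level_pos[of A E i] by (simp add: comparison_seq_def add_pos_pos)

lemma comparison_seq_prefix:
  assumes "0 < A" "0 < E" "1 \<le> j" "j \<le> m - 1"
  shows "sum (comparison_seq m A E) {..<j} = E - greedy_level A E j \<and>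
         A * prod (comparison_seq m A E) {..<j} = greedy_level A E j"
  using assms(3,4)
proof (induction j rule: nat_induct_at_least)
  case base
  have "E - A * E / (1 + A) = E / (1 + A)" using assms(1) by (simp add: field_simps)
  then show ?case by (simp add: comparison_seq_def greedy_level_def)
next
  case (Suc j)
  define d where "d = greedy_level A E j"
  have "0 < d" using assms by (simp add: d_def greedy_level_pos)
  have "j < m - 1" using Suc.prems by simp
  then have IH: "sum (comparison_seq m A E) {..<j} = E - d"
      "A * prod (comparison_seq m A E) {..<j} = d"
    using Suc.IH by (auto simp: d_def)
  have step: "greedy_level A E (Suc j) = egyptian_step d" "comparison_seq m A E j = d / (1 + d)"
    using Suc.hyps \<open>j < m - 1\<close> by (auto simp: d_def greedy_level_Suc comparison_seq_def)
  have "egyptian_step d + d / (1 + d) = d * (1 + d) / (1 + d)"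
    by (simp add: egyptian_step_def add_divide_distrib[symmetric] power2_eq_square algebra_simps)
  then have "d = egyptian_step d + d / (1 + d)" using \<open>0 < d\<close> by simp
  then show ?case using IH step by (simp add: egyptian_step_def power2_eq_square)
qed

lemma comparison_seq_total:
  assumes "0 < A" "0 < E" "2 \<le> m"
  shows "sum (comparison_seq m A E) {..<m} = E"
    and "A * prod (comparison_seq m A E) {..<m} = extremal_value m A E"
proof -
  have split: "{..<m} = insert (m - 1) {..<m - 1}" using assms(3) by auto
  have last: "comparison_seq m A E (m - 1) = greedy_level A E (m - 1)"
    using assms(3) by (simp add: comparison_seq_def)
  have prefix: "sum (comparison_seq m A E) {..<m - 1} = E - greedy_level A E (m - 1)"
      "A * prod (comparison_seq m A E) {..<m - 1} = greedy_level A E (m - 1)"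
    using comparison_seq_prefix[OF assms(1,2), of "m - 1" m] assms(3) by auto
  show "sum (comparison_seq m A E) {..<m} = E"
    unfolding split using last prefix by simp
  have "A * prod (comparison_seq m A E) {..<m} =
      A * prod (comparison_seq m A E) {..<m - 1} * comparison_seq m A E (m - 1)"
    unfolding split by (simp add: mult.assoc)
  also have "\<dots> = (greedy_level A E (m - 1))\<^sup>2"
    by (simp only: prefix(2) last power2_eq_square)
  also have "\<dots> = extremal_value m A E" using assms(3) by (simp add: extremal_value_def)
  finally show "A * prod (comparison_seq m A E) {..<m} = extremal_value m A E" .
qed

(* If no prefix product reaches the greedy level, the claim follows by
  comparing with the extremal sequence through the majorisation lemma. *)
lemma extremal_inequality_unsaturated:
  assumes adm: "admissible m A x" and "2 \<le> m"
    and unsaturated: "\<forall>k. 1 \<le> k \<longrightarrow> k < m \<longrightarrow> A * prod x {..<k} < greedy_level A (sum x {..<m}) k"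
  shows "extremal_value m A (sum x {..<m}) \<le> A * prod x {..<m}"
proof (rule ccontr)
  define E where "E = sum x {..<m}"
  define y where "y = comparison_seq m A E"
  have "0 < A" "\<forall>i<m. 0 < x i" "\<forall>i. Suc i < m \<longrightarrow> x (Suc i) \<le> x i"
    using adm unfolding admissible_def by auto
  moreover have "0 < E" unfolding E_def using \<open>\<forall>i<m. 0 < x i\<close> \<open>2 \<le> m\<close> by (intro sum_pos) (auto simp: lessThan_empty_iff)
  ultimately have y_pos: "\<forall>i<m. 0 < y i" by (simp add: y_def comparison_seq_pos)
  have "prod x {..<k} \<le> prod y {..<k}" if "1 \<le> k" "k < m" for k
  proof -
    have "A * prod x {..<k} < A * prod y {..<k}"
      using unsaturated comparison_seq_prefix[OF \<open>0 < A\<close> \<open>0 < E\<close>, of k m] that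
      by (simp add: y_def E_def)
    with \<open>0 < A\<close> show ?thesis by simp
  qed
  moreover assume "\<not> extremal_value m A (sum x {..<m}) \<le> A * prod x {..<m}"
  then have "A * prod x {..<m} < A * prod y {..<m}"
    using comparison_seq_total(2)[OF \<open>0 < A\<close> \<open>0 < E\<close> \<open>2 \<le> m\<close>] by (simp add: y_def E_def)
  with \<open>0 < A\<close> have "prod x {..<m} < prod y {..<m}" by simp
  ultimately have "sum x {..<m} < sum y {..<m}"
    using sum_less_of_prefix_prod_le[of m x y] \<open>\<forall>i<m. 0 < x i\<close> y_pos
      \<open>\<forall>i. Suc i < m \<longrightarrow> x (Suc i) \<le> x i\<close> \<open>2 \<le> m\<close> by simp
  then show False
    using comparison_seq_total(1)[OF \<open>0 < A\<close> \<open>0 < E\<close> \<open>2 \<le> m\<close>] by (simp add: y_def E_def)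
qed

lemma extremal_inequality_saturated:
  assumes adm: "admissible m A x" and k: "1 \<le> k" "k < m"
    and saturated: "greedy_level A (sum x {..<m}) k \<le> A * prod x {..<k}"
    and tail: "extremal_value (m - k) (A * prod x {..<k}) (sum (\<lambda>i. x (i + k)) {..<m - k})
                 \<le> A * prod x {..<k} * prod (\<lambda>i. x (i + k)) {..<m - k}"
  shows "extremal_value m A (sum x {..<m}) \<le> A * prod x {..<m}"
proof -
  define E where "E = sum x {..<m}"
  have "0 < A" "\<forall>i<m. 0 < x i" "\<forall>k<m. A * prod x {..<k} \<le> sum x {k..<m}"
    using adm unfolding admissible_def by auto
  have "0 < E" unfolding E_def using \<open>\<forall>i<m. 0 < x i\<close> k by (intro sum_pos) auto
  have tail_sum: "sum (\<lambda>i. x (i + k)) {..<m - k} = sum x {k..<m}"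
    using k sum.shift_bounds_nat_ivl[of x 0 k "m - k"] by (simp add: atLeast0LessThan)
  have tail_prod: "prod x {..<k} * prod (\<lambda>i. x (i + k)) {..<m - k} = prod x {..<m}"
    using k prod.atLeastLessThan_concat[of 0 k m x] prod.shift_bounds_nat_ivl[of x 0 k "m - k"]
    by (simp add: atLeast0LessThan)
  have "extremal_value m A E = extremal_value (m - k) (greedy_level A E k) (greedy_level A E k)"
    using extremal_value_restart[OF k] by simp
  also have "\<dots> \<le> extremal_value (m - k) (A * prod x {..<k}) (sum x {k..<m})"
    using k saturated \<open>\<forall>k<m. A * prod x {..<k} \<le> sum x {k..<m}\<close> \<open>0 < A\<close> \<open>0 < E\<close>
    by (intro extremal_value_mono) (auto simp: E_def greedy_level_pos)
  also have "\<dots> \<le> A * prod x {..<m}"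
    using tail tail_sum tail_prod by (simp add: mult.assoc)
  finally show ?thesis by (simp add: E_def)
qed

theorem extremal_inequality:
  assumes "1 \<le> m" "admissible m A x"
  shows "extremal_value m A (sum x {..<m}) \<le> A * prod x {..<m}"
  using assms
proof (induction m arbitrary: A x rule: less_induct)
  case (less m)
  show ?case
  proof (cases "m = 1")
    case True
    then show ?thesis by (simp add: extremal_value_def)
  next
    case False
    with less.prems(1) have "2 \<le> m" by simp
    show ?thesis
    proof (cases "\<exists>k. 1 \<le> k \<and> k < m \<and> greedy_level A (sum x {..<m}) k \<le> A * prod x {..<k}")
      case True
      then obtain k where k: "1 \<le> k" "k < m" "greedy_level A (sum x {..<m}) k \<le> A * prod x {..<k}"
        by blast
      then show ?thesis
        using less.IH[of "m - k"] admissible_shift[OF less.prems(2), of k]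
        by (intro extremal_inequality_saturated[OF less.prems(2)]) auto
    next
      case False
      then show ?thesis
        using extremal_inequality_unsaturated[OF less.prems(2) \<open>2 \<le> m\<close>] by (auto simp: not_le)
    qed
  qed
qed

(* If sum_i 1/k_i = 1, the tail after the first k terms is a positive fraction with
  denominator dividing k_0 ... k_(k-1), hence at least its reciprocal. *)
lemma unit_fraction_tail_bound:
  fixes ks :: "nat \<Rightarrow> nat"
  assumes pos: "\<forall>i<m. 0 < ks i" and sum_one: "(\<Sum>i<m. 1 / real (ks i)) = 1" and "k < m"
  shows "1 / real (prod ks {..<k}) \<le> (\<Sum>i\<in>{k..<m}. 1 / real (ks i))"
proof -
  define P where "P = prod ks {..<k}"
  define N where "N = (\<Sum>i<k. P div ks i)"
  define T where "T = (\<Sum>i\<in>{k..<m}. 1 / real (ks i))"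
  have "0 < P" unfolding P_def using pos \<open>k < m\<close> by (intro prod_pos) auto
  have head: "real P * (\<Sum>i<k. 1 / real (ks i)) = real N"
  proof -
    have "ks i dvd P" if "i < k" for i unfolding P_def using that by (intro dvd_prodI) auto
    then show ?thesis by (simp add: N_def sum_distrib_left real_of_nat_div)
  qed
  have "(\<Sum>i<k. 1 / real (ks i)) + T = 1"
    using sum.atLeastLessThan_concat[of 0 k m "\<lambda>i. 1 / real (ks i)"] \<open>k < m\<close> sum_one
    by (simp add: T_def atLeast0LessThan)
  then have tail: "real P * T = real P - real N"
    using head by (metis add_diff_cancel_left' distrib_left mult.right_neutral)
  have "0 < T" unfolding T_def using pos \<open>k < m\<close> by (intro sum_pos) auto
  with \<open>0 < P\<close> have "0 < real P * T" by simp
  then have "N < P" using tail by simp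
  then have "real N + 1 \<le> real P" by linarith
  then have "1 \<le> real P * T" using tail by simp
  with \<open>0 < P\<close> have "1 / real P \<le> T" by (simp add: divide_le_eq mult.commute)
  then show ?thesis unfolding P_def T_def .
qed

lemma unit_fraction_prod_bound_sorted:
  fixes ks :: "nat \<Rightarrow> nat"
  assumes "2 \<le> m" and pos: "\<forall>i<m. 0 < ks i"
    and nondecreasing: "\<forall>i. Suc i < m \<longrightarrow> ks i \<le> ks (Suc i)"
    and sum_one: "(\<Sum>i<m. 1 / real (ks i)) = 1"
  shows "(\<Prod>i<m. ks i) \<le> (sylv_prod (m - 1))\<^sup>2"
proof -
  define x where "x i = 1 / real (ks i)" for i
  have prod_x: "prod x {..<k} = 1 / real (prod ks {..<k})" for k
    by (simp add: x_def prod_dividef)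
  have "admissible m 1 x"
    unfolding admissible_def prod_x
    using pos nondecreasing unit_fraction_tail_bound[OF pos sum_one]
    by (auto simp: x_def frac_le)
  then have "extremal_value m 1 (sum x {..<m}) \<le> 1 * prod x {..<m}"
    using \<open>2 \<le> m\<close> by (intro extremal_inequality) auto
  then have "extremal_value m 1 1 \<le> 1 / real (prod ks {..<m})"
    using sum_one unfolding prod_x by (simp add: x_def)
  then have "inverse ((real (sylv_prod (m - 1)))\<^sup>2) \<le> inverse (real (prod ks {..<m}))"
    using extremal_value_1_1[OF \<open>2 \<le> m\<close>] by (simp add: power_one_over inverse_eq_divide)
  moreover have "0 < real (prod ks {..<m})" using pos by (simp only: of_nat_0_less_iff, intro prod_pos) auto
  moreover have "0 < (real (sylv_prod (m - 1)))\<^sup>2" using sylv_prod_pos by simp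
  ultimately have "real (prod ks {..<m}) \<le> (real (sylv_prod (m - 1)))\<^sup>2"
    by (metis inverse_le_iff_le)
  then show ?thesis by (metis of_nat_le_iff of_nat_power)
qed

lemma unit_fraction_prod_bound:
  fixes ks :: "nat list"
  assumes "2 \<le> length ks" "0 \<notin> set ks" "(\<Sum>k\<leftarrow>ks. 1 / real k) = 1"
  shows "prod_list ks \<le> (sylv_prod (length ks - 1))\<^sup>2"
proof -
  define L where "L = sort ks"
  have "mset L = mset ks" by (simp add: L_def)
  then have same: "sum_list (map f L) = sum_list (map f ks)" "prod_list L = prod_list ks"
    "length L = length ks" "set L = set ks" for f :: "nat \<Rightarrow> real"
    by (metis mset_map sum_mset_sum_list, metis prod_mset_prod_list, metis size_mset,
        metis set_mset_mset)
  have "(\<Prod>i<length L. L ! i) \<le> (sylv_prod (length L - 1))\<^sup>2"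
  proof (rule unit_fraction_prod_bound_sorted)
    show "2 \<le> length L" "\<forall>i<length L. 0 < L ! i"
      using assms same by (auto, metis gr0I nth_mem)
    show "\<forall>i. Suc i < length L \<longrightarrow> L ! i \<le> L ! Suc i"
      by (simp add: L_def sorted_nth_mono)
    show "(\<Sum>i<length L. 1 / real (L ! i)) = 1"
      using assms(3) same(1)[of "\<lambda>k. 1 / real k"] by (simp add: sum.list_conv_set_nth atLeast0LessThan)
  qed
  then show ?thesis
    using same by (simp add: prod.list_conv_set_nth atLeast0LessThan)
qed

lemma prime_misses_two_weights:
  fixes wt :: "'a \<Rightarrow> nat"
  assumes "finite I" "Gcd (wt ` I) = 1" "prime p" "p dvd (\<Sum>i\<in>I. wt i)"
  obtains i j where "i \<in> I" "j \<in> I" "i \<noteq> j" "\<not> p dvd wt i" "\<not> p dvd wt j"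
proof -
  obtain i where i: "i \<in> I" "\<not> p dvd wt i"
  proof -
    have "\<not> p dvd Gcd (wt ` I)" using assms(2,3) by (metis nat_dvd_1_iff_1 not_prime_1)
    then show ?thesis using that by (metis Gcd_greatest imageE)
  qed
  obtain j where j: "j \<in> I - {i}" "\<not> p dvd wt j"
  proof (rule ccontr)
    assume "\<not> thesis"
    then have "p dvd (\<Sum>j\<in>I - {i}. wt j)" using that by (intro dvd_sum) auto
    moreover have "(\<Sum>i\<in>I. wt i) = wt i + (\<Sum>j\<in>I - {i}. wt j)"
      using assms(1) i(1) by (simp add: sum.remove)
    ultimately show False using assms(4) i(2) by (metis dvd_add_left_iff)
  qed
  show ?thesis using that i j by blast
qed

lemma weights_prod_dvd_power:
  fixes wt :: "'a \<Rightarrow> nat"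
  assumes "finite I" and pos: "\<forall>i\<in>I. 0 < wt i" and dvd: "\<forall>i\<in>I. wt i dvd h"
    and h: "h = (\<Sum>i\<in>I. wt i)" and coprime: "Gcd (wt ` I) = 1"
  shows "(\<Prod>i\<in>I. wt i) dvd h ^ (card I - 2)"
proof (rule multiplicity_le_imp_dvd)
  show "(\<Prod>i\<in>I. wt i) \<noteq> 0" using pos \<open>finite I\<close> by auto
  fix p :: nat assume p: "prime p"
  have "I \<noteq> {}" using coprime by auto
  then have "0 < h" using h pos \<open>finite I\<close> by (simp add: sum_pos)
  have mult_prod: "multiplicity p (\<Prod>i\<in>I. wt i) = (\<Sum>i\<in>I. multiplicity p (wt i))"
    using p pos \<open>finite I\<close>
    by (intro prime_elem_multiplicity_prod_distrib) (auto simp: prime_imp_prime_elem)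
  have mult_power: "multiplicity p (h ^ (card I - 2)) = (card I - 2) * multiplicity p h"
    using p \<open>0 < h\<close> by (intro prime_elem_multiplicity_power_distrib) (auto simp: prime_imp_prime_elem)
  have mult_le: "multiplicity p (wt i) \<le> multiplicity p h" if "i \<in> I" for i
    using dvd \<open>0 < h\<close> that by (intro dvd_imp_multiplicity_le) auto
  show "multiplicity p (\<Prod>i\<in>I. wt i) \<le> multiplicity p (h ^ (card I - 2))"
  proof (cases "p dvd h")
    case False
    then have "multiplicity p (wt i) = 0" if "i \<in> I" for i
      using dvd that by (meson dvd_trans not_dvd_imp_multiplicity_0)
    then show ?thesis using mult_prod by simp
  next
    case True
    then obtain i j where ij: "i \<in> I" "j \<in> I" "i \<noteq> j" "\<not> p dvd wt i" "\<not> p dvd wt j"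
      using prime_misses_two_weights[OF \<open>finite I\<close> coprime p] h by blast
    have "(\<Sum>i\<in>I. multiplicity p (wt i)) = (\<Sum>k\<in>I - {i, j}. multiplicity p (wt k))"
      using ij \<open>finite I\<close> not_dvd_imp_multiplicity_0[of p "wt i"] not_dvd_imp_multiplicity_0[of p "wt j"]
      by (intro sum.mono_neutral_right) auto
    also have "\<dots> \<le> (\<Sum>k\<in>I - {i, j}. multiplicity p h)"
      using mult_le by (intro sum_mono) auto
    also have "\<dots> = (card I - 2) * multiplicity p h"
      using ij \<open>finite I\<close> by (simp add: card_Diff_subset numeral_2_eq_2)
    finally show ?thesis using mult_prod mult_power by simp
  qed
qed

(* Coprime positive weights dividing their sum h satisfy h <= y_0 ... y_(|I|-2):
  the quotients h / lambda_i are unit-fraction denominators summing to 1, and their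
  product is at least h^2. *)
theorem divisible_weights_bound:
  fixes wt :: "'a \<Rightarrow> nat"
  assumes "finite I" "2 \<le> card I" and pos: "\<forall>i\<in>I. 0 < wt i"
    and dvd: "\<forall>i\<in>I. wt i dvd (\<Sum>j\<in>I. wt j)" and coprime: "Gcd (wt ` I) = 1"
  shows "(\<Sum>i\<in>I. wt i) \<le> sylv_prod (card I - 1)"
proof -
  define h where "h = (\<Sum>i\<in>I. wt i)"
  define k where "k i = h div wt i" for i
  obtain xs where xs: "distinct xs" "set xs = I" using finite_distinct_list[OF \<open>finite I\<close>] by blast
  define ks where "ks = map k xs"
  have "I \<noteq> {}" using assms(2) by auto
  then have "0 < h" using pos \<open>finite I\<close> by (simp add: h_def sum_pos)
  have k_wt: "k i * wt i = h" if "i \<in> I" for i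
    using dvd that by (simp add: k_def h_def)
  have list_sum: "sum_list (map f ks) = (\<Sum>i\<in>I. f (k i))" for f :: "nat \<Rightarrow> real"
    using xs by (simp add: ks_def sum_list_distinct_conv_sum_set)
  have "(\<Sum>i\<in>I. 1 / real (k i)) = (\<Sum>i\<in>I. real (wt i) / real h)"
  proof (rule sum.cong)
    fix i assume "i \<in> I"
    then have "real (k i) * real (wt i) = real h" "0 < wt i"
      using k_wt pos by (metis of_nat_mult, simp)
    then have "real (k i) = real h / real (wt i)" by (simp add: field_simps)
    with \<open>0 < h\<close> show "1 / real (k i) = real (wt i) / real h" by simp
  qed simp
  also have "\<dots> = real h / real h" by (simp add: h_def flip: sum_divide_distrib)
  also have "\<dots> = 1" using \<open>0 < h\<close> by simp
  finally have "(\<Sum>x\<leftarrow>ks. 1 / real x) = 1" using list_sum by simp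
  moreover have "0 \<notin> set ks" "length ks = card I"
    using k_wt \<open>0 < h\<close> xs by (auto simp: ks_def distinct_card, metis mult_0 less_irrefl)
  moreover have "prod_list ks = (\<Prod>i\<in>I. k i)"
    using prod.distinct_set_conv_list[OF xs(1), of k] xs(2) by (simp add: ks_def)
  ultimately have "(\<Prod>i\<in>I. k i) \<le> (sylv_prod (card I - 1))\<^sup>2"
    using unit_fraction_prod_bound[of ks] assms(2) by simp
  moreover have "h\<^sup>2 \<le> (\<Prod>i\<in>I. k i)"
  proof -
    have "(\<Prod>i\<in>I. k i) * (\<Prod>i\<in>I. wt i) = h ^ card I"
      using k_wt by (simp add: prod.distrib[symmetric])
    also have "\<dots> = h\<^sup>2 * h ^ (card I - 2)"
      using assms(2) by (metis le_add_diff_inverse power_add)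
    finally have "(\<Prod>i\<in>I. k i) * (\<Prod>i\<in>I. wt i) = h\<^sup>2 * h ^ (card I - 2)" .
    moreover have "(\<Prod>i\<in>I. wt i) \<le> h ^ (card I - 2)"
      using weights_prod_dvd_power[OF \<open>finite I\<close> pos _ h_def coprime] dvd \<open>0 < h\<close>
      by (simp add: h_def dvd_imp_le)
    ultimately show ?thesis using \<open>0 < h\<close>
      by (metis mult_le_cancel1 mult_le_mono2 mult.commute nat_zero_less_power_iff zero_less_iff_neq_zero)
  qed
  ultimately have "h\<^sup>2 \<le> (sylv_prod (card I - 1))\<^sup>2" by (rule order_trans[rotated])
  then show ?thesis unfolding h_def by (simp add: power2_nat_le_eq_le)
qed

lemma lat_pair_sum:
  fixes u :: "int^'n" and c :: "nat \<Rightarrow> int" and v :: "nat \<Rightarrow> int^'n"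
  shows "lat_pair u (\<Sum>j\<in>S. c j *s v j) = (\<Sum>j\<in>S. c j * lat_pair u (v j))"
  unfolding lat_pair_def
  by (simp add: sum_distrib_left sum_distrib_right algebra_simps sum.swap[of _ UNIV S])

(* Gorenstein condition: pairing sum_j lambda_j rho_j = 0 with the dual point u_i of
  the cone sigma_i gives h = lambda_i (1 - <u_i, rho_i>), so every weight divides h. *)
lemma gorenstein_weight_dvd:
  fixes \<rho> :: "nat \<Rightarrow> int^'n"
  assumes "are_weights \<rho> wt" "fwps_gorenstein \<rho>" "i \<in> {0..CARD('n)}"
  shows "wt i dvd (\<Sum>j\<in>{0..CARD('n)}. wt j)"
proof -
  define I where "I = {0..CARD('n)}"
  obtain u :: "int^'n" where u: "\<forall>j\<in>I - {i}. lat_pair u (\<rho> j) = 1"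
    using assms(2,3) unfolding fwps_gorenstein_def I_def by blast
  have "0 = lat_pair u (\<Sum>j\<in>I. int (wt j) *s \<rho> j)"
    using assms(1) unfolding are_weights_def lat_pair_def I_def by simp
  also have "\<dots> = int (wt i) * lat_pair u (\<rho> i) + (\<Sum>j\<in>I - {i}. int (wt j) * lat_pair u (\<rho> j))"
    using assms(3) unfolding lat_pair_sum by (simp add: I_def sum.remove)
  also have "(\<Sum>j\<in>I - {i}. int (wt j) * lat_pair u (\<rho> j)) = int (\<Sum>j\<in>I. wt j) - int (wt i)"
    using u assms(3) by (simp add: I_def sum.remove)
  finally have "int (\<Sum>j\<in>I. wt j) = int (wt i) * (1 - lat_pair u (\<rho> i))"
    by (simp add: algebra_simps)
  then have "int (wt i) dvd int (\<Sum>j\<in>I. wt j)" by (metis dvd_triv_left)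
  then show ?thesis unfolding I_def by (simp only: int_dvd_int_iff)
qed

(* The main theorem. *)
theorem mainTheorem10:
  fixes \<rho> :: "nat \<Rightarrow> int^'n" and wt :: "nat \<Rightarrow> nat"
  assumes "fake_wps_data \<rho>"
    and "are_weights \<rho> wt"
    and "fwps_gorenstein \<rho>"
    and "fwps_canonical \<rho>"
  shows "(\<Sum>i\<in>{0..CARD('n)}. wt i) \<le> sylvester CARD('n) - 1"
proof -
  have "(\<Sum>i\<in>{0..CARD('n)}. wt i) \<le> sylv_prod (card {0..CARD('n)} - 1)"
  proof (rule divisible_weights_bound)
    show "2 \<le> card {0..CARD('n)}" by simp
    show "\<forall>i\<in>{0..CARD('n)}. 0 < wt i" "Gcd (wt ` {0..CARD('n)}) = 1"
      using assms(2) unfolding are_weights_def by auto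
    show "\<forall>i\<in>{0..CARD('n)}. wt i dvd (\<Sum>j\<in>{0..CARD('n)}. wt j)"
      using gorenstein_weight_dvd[OF assms(2,3)] by blast
  qed simp
  then show ?thesis by (simp add: sylvester_def)
qed

end
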